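(* Let $n \geq 4$ be an integer and let $A \in \mathbb{C}^{n \times n}$ be a matrix whose entries are all bounded in absolute value by a real number $B > 1$. Let $C_A(X) = \det(X I_n - A) = \sum_{j=0}^{n} c_j X^j$ be the characteristic polynomial of $A$, and let $\|C_A\|_\infty = \max_{0 \le j \le n} |c_j|$. Then $$\log_2\left(\|C_A\|_\infty\right) \leq \frac{n}{2}\left(\log_2(n) + \log_2(B^2) + 0.21163175\right).$$ *)

theory Defs
  imports "Jordan_Normal_Form.Char_Poly"
begin

definition poly_inf_norm :: "complex poly \<Rightarrow> real" where
  "poly_inf_norm p = Max ((\<lambda>j. cmod (coeff p j)) ` {0..degree p})"

end

theory Submission
  imports Defs
begin

(* By the derivative identity for characteristic polynomials (the derivative of char_poly A is the
  sum of the characteristic polynomials of the principal (n-1)-minors of A), induction on j shows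
  that the coefficient c_j is bounded by C(n,j) times a bound for the determinants of
  (n-j)x(n-j) matrices with entries of modulus at most B; by Hadamard's inequality the latter is
  (n-j)^((n-j)/2) B^(n-j). It remains to prove C(n,k)^2 k^k <= (lambda0 n)^n for all k <= n and
  n >= 4, where lambda0 = 2 powr 0.21163175. For n - k >= 7 this follows from
  C(n,k) k^k (n-k)^(n-k) <= n^n together with C(n,k) <= n^(n-k)/(n-k)! <= (n-k)^(n-k) lambda0^n.
  For fixed m = n - k the inequality propagates from n to n + 1 as soon as n + 1 <= lambda0 (k + 1),
  since (1 + 1/k)^k increases with k; the finitely many remaining cases are checked numerically. *)

section \<open>Hadamard's inequality\<close>

definition cinner :: "nat \<Rightarrow> (nat \<Rightarrow> complex) \<Rightarrow> (nat \<Rightarrow> complex) \<Rightarrow> complex" where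
  "cinner k u v = (\<Sum>t<k. u t * cnj (v t))"

definition sq_norm_fun :: "nat \<Rightarrow> (nat \<Rightarrow> complex) \<Rightarrow> real" where
  "sq_norm_fun k u = (\<Sum>t<k. (cmod (u t))\<^sup>2)"

definition mat_row_fun :: "'a mat \<Rightarrow> nat \<Rightarrow> nat \<Rightarrow> 'a" where
  "mat_row_fun W a = (\<lambda>t. W $$ (a, t))"

lemma cinner_self: "cinner k u u = of_real (sq_norm_fun k u)"
  unfolding cinner_def sq_norm_fun_def of_real_sum
  by (intro sum.cong refl) (rule complex_norm_square[symmetric])

lemma cinner_commute: "cinner k u v = cnj (cinner k v u)"
  unfolding cinner_def by (simp add: mult.commute)

lemma sq_norm_fun_nonneg: "0 \<le> sq_norm_fun k u"
  unfolding sq_norm_fun_def by (intro sum_nonneg) auto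

lemma cinner_sq_norm_fun_eq_0:
  assumes "sq_norm_fun k u = 0"
  shows "cinner k v u = 0"
proof -
  have "u t = 0" if "t < k" for t
    using assms that unfolding sq_norm_fun_def by (subst (asm) sum_nonneg_eq_0_iff) auto
  then show ?thesis
    unfolding cinner_def by (intro sum.neutral) auto
qed

lemma cinner_cong:
  "(\<And>t. t < k \<Longrightarrow> u t = u' t) \<Longrightarrow> (\<And>t. t < k \<Longrightarrow> v t = v' t) \<Longrightarrow> cinner k u v = cinner k u' v'"
  unfolding cinner_def by (intro sum.cong) auto

lemma sq_norm_fun_cong: "(\<And>t. t < k \<Longrightarrow> u t = u' t) \<Longrightarrow> sq_norm_fun k u = sq_norm_fun k u'"
  unfolding sq_norm_fun_def by (intro sum.cong) auto

lemma cinner_add_sum_left: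
  "cinner k (\<lambda>t. u t + (\<Sum>i\<in>I. f i * w i t)) v = cinner k u v + (\<Sum>i\<in>I. f i * cinner k (w i) v)"
  unfolding cinner_def
  by (simp add: distrib_right sum.distrib sum_distrib_right sum_distrib_left mult.assoc sum.swap[of _ I])

lemma cinner_add_sum_right:
  "cinner k u (\<lambda>t. v t + (\<Sum>i\<in>I. f i * w i t)) = cinner k u v + (\<Sum>i\<in>I. cnj (f i) * cinner k u (w i))"
  unfolding cinner_def
  by (simp add: distrib_left sum.distrib sum_distrib_right sum_distrib_left mult.assoc
      mult.left_commute sum.swap[of _ I])

(* One Gram-Schmidt step; a zero vector w i gets the coefficient x / 0 = 0 and is thereby skipped. *)
definition gs_residual :: "nat \<Rightarrow> (nat \<Rightarrow> nat \<Rightarrow> complex) \<Rightarrow> nat \<Rightarrow> (nat \<Rightarrow> complex) \<Rightarrow> nat \<Rightarrow> complex" where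
  "gs_residual k w l v =
     (\<lambda>t. v t + (\<Sum>i<l. - cinner k v (w i) / cinner k (w i) (w i) * w i t))"

context
  fixes k l :: nat and w :: "nat \<Rightarrow> nat \<Rightarrow> complex"
  assumes orth: "\<And>a b. a < l \<Longrightarrow> b < l \<Longrightarrow> a \<noteq> b \<Longrightarrow> cinner k (w a) (w b) = 0"
begin

lemma cinner_gs_residual: "b < l \<Longrightarrow> cinner k (gs_residual k w l v) (w b) = 0"
proof -
  assume b: "b < l"
  let ?c = "\<lambda>i. - cinner k v (w i) / cinner k (w i) (w i)"
  have "cinner k (gs_residual k w l v) (w b) = cinner k v (w b) + (\<Sum>i<l. ?c i * cinner k (w i) (w b))"
    unfolding gs_residual_def by (rule cinner_add_sum_left)
  also have "(\<Sum>i<l. ?c i * cinner k (w i) (w b)) = ?c b * cinner k (w b) (w b)"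
    using b orth by (subst sum.remove[of _ b]) (auto intro!: sum.neutral)
  also have "cinner k v (w b) + ?c b * cinner k (w b) (w b) = 0"
  proof (cases "cinner k (w b) (w b) = 0")
    case True
    then have "cinner k v (w b) = 0"
      by (intro cinner_sq_norm_fun_eq_0) (simp add: cinner_self)
    with True show ?thesis by simp
  qed simp
  finally show ?thesis .
qed

lemma sq_norm_fun_gs_residual_le: "sq_norm_fun k (gs_residual k w l v) \<le> sq_norm_fun k v"
proof -
  let ?r = "gs_residual k w l v"
  let ?d = "\<Sum>i<l. (cmod (cinner k v (w i)))\<^sup>2 / sq_norm_fun k (w i)"
  have "cinner k ?r ?r
      = cinner k ?r v + (\<Sum>i<l. cnj (- cinner k v (w i) / cinner k (w i) (w i)) * cinner k ?r (w i))"
    by (subst (2) gs_residual_def) (rule cinner_add_sum_right)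
  also have "\<dots> = cinner k ?r v"
    by (simp add: cinner_gs_residual)
  also have "\<dots> = cinner k v v
      + (\<Sum>i<l. - cinner k v (w i) / cinner k (w i) (w i) * cinner k (w i) v)"
    unfolding gs_residual_def by (rule cinner_add_sum_left)
  also have "(\<Sum>i<l. - cinner k v (w i) / cinner k (w i) (w i) * cinner k (w i) v) = of_real (- ?d)"
    unfolding of_real_minus of_real_sum sum_negf[symmetric]
    by (intro sum.cong refl)
      (simp add: cinner_commute[of k "w _" v] cinner_self flip: complex_norm_square)
  finally have "of_real (sq_norm_fun k ?r) = (of_real (sq_norm_fun k v - ?d) :: complex)"
    unfolding cinner_self by simp
  then have "sq_norm_fun k ?r = sq_norm_fun k v - ?d"
    by (simp only: of_real_eq_iff)
  moreover have "0 \<le> ?d"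
    by (intro sum_nonneg divide_nonneg_nonneg sq_norm_fun_nonneg) auto
  ultimately show ?thesis by linarith
qed

end

lemma det_add_earlier_rows:
  fixes W :: "'a :: comm_ring_1 mat"
  assumes W: "W \<in> carrier_mat k k" and l: "l < k"
  shows "det (mat k k (\<lambda>(a, t). if a = l then W $$ (l, t) + (\<Sum>i<l. c i * W $$ (i, t)) else W $$ (a, t)))
    = det W"
proof -
  define E where "E = mat k k (\<lambda>(a, b). if a = b then 1 else if a = l \<and> b < l then c b else 0)"
  have E: "E \<in> carrier_mat k k"
    unfolding E_def by simp
  have "det E = prod_list (diag_mat E)"
    by (rule det_lower_triangular[OF _ E]) (auto simp: E_def)
  also have "\<dots> = 1"
    unfolding prod_list_diag_prod using E by (auto simp: E_def intro!: prod.neutral)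
  finally have det_E: "det E = 1" .
  define M where
    "M = mat k k (\<lambda>(a, t). if a = l then W $$ (l, t) + (\<Sum>i<l. c i * W $$ (i, t)) else W $$ (a, t))"
  have "E * W = M"
  proof (rule eq_matI)
    fix a t assume "a < dim_row M" "t < dim_col M"
    then have a: "a < k" and t: "t < k"
      by (auto simp: M_def)
    have "(E * W) $$ (a, t) = (\<Sum>s<k. E $$ (a, s) * W $$ (s, t))"
      using a t E W by (simp add: scalar_prod_def atLeast0LessThan)
    also have "\<dots>
        = (\<Sum>s<k. (if s = a then W $$ (s, t) else 0) + (if a = l \<and> s < l then c s * W $$ (s, t) else 0))"
      using a by (intro sum.cong refl) (auto simp: E_def)
    also have "\<dots> = W $$ (a, t) + (if a = l then (\<Sum>s<l. c s * W $$ (s, t)) else 0)"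
      using a l by (simp add: sum.distrib sum.If_cases Int_absorb1 flip: lessThan_def)
    finally show "(E * W) $$ (a, t) = M $$ (a, t)"
      using a t by (simp add: M_def)
  qed (use E W in \<open>auto simp: M_def\<close>)
  then show ?thesis
    using det_mult[OF E W] det_E by (simp add: M_def)
qed

lemma orthogonalize_row:
  assumes W: "W \<in> carrier_mat k k" and l: "l < k"
    and orth: "\<And>a b. a < l \<Longrightarrow> b < l \<Longrightarrow> a \<noteq> b \<Longrightarrow> cinner k (mat_row_fun W a) (mat_row_fun W b) = 0"
  obtains W' where "W' \<in> carrier_mat k k" "det W' = det W"
    "\<And>a. a < k \<Longrightarrow> sq_norm_fun k (mat_row_fun W' a) \<le> sq_norm_fun k (mat_row_fun W a)"
    "\<And>a b. a < Suc l \<Longrightarrow> b < Suc l \<Longrightarrow> a \<noteq> b \<Longrightarrow> cinner k (mat_row_fun W' a) (mat_row_fun W' b) = 0"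
proof -
  let ?w = "mat_row_fun W"
  let ?c = "\<lambda>i. - cinner k (?w l) (?w i) / cinner k (?w i) (?w i)"
  let ?r = "gs_residual k ?w l (?w l)"
  let ?v = "\<lambda>a. if a = l then ?r else ?w a"
  define W' where "W' = mat k k (\<lambda>(a, t). if a = l then ?r t else W $$ (a, t))"
  have W': "W' \<in> carrier_mat k k"
    unfolding W'_def by simp
  have row_W': "mat_row_fun W' a t = ?v a t" if "a < k" "t < k" for a t
    using that unfolding W'_def mat_row_fun_def by simp
  have "det W' = det W"
    using det_add_earlier_rows[OF W l, of ?c]
    unfolding W'_def gs_residual_def mat_row_fun_def .
  moreover have "sq_norm_fun k (mat_row_fun W' a) \<le> sq_norm_fun k (?w a)" if "a < k" for a
    using sq_norm_fun_gs_residual_le[where w = ?w, OF orth] row_W'[OF that]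
    by (subst sq_norm_fun_cong[where u' = "?v a"]) auto
  moreover have "cinner k (mat_row_fun W' a) (mat_row_fun W' b) = 0"
    if ab: "a < Suc l" "b < Suc l" "a \<noteq> b" for a b
  proof -
    have "cinner k (?v a) (?v b) = 0"
      using ab cinner_gs_residual[where w = ?w, OF orth] orth cinner_commute[of k "?w a" ?r]
      by (cases "a = l"; cases "b = l") auto
    then show ?thesis
      using ab l row_W' by (subst cinner_cong[where u' = "?v a" and v' = "?v b"]) auto
  qed
  ultimately show ?thesis
    using that[OF W'] by blast
qed

lemma orthogonalize_rows:
  assumes W: "W \<in> carrier_mat k k" and l: "l \<le> k"
  shows "\<exists>W' \<in> carrier_mat k k. det W' = det W
    \<and> (\<forall>a<k. sq_norm_fun k (mat_row_fun W' a) \<le> sq_norm_fun k (mat_row_fun W a))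
    \<and> (\<forall>a b. a < l \<longrightarrow> b < l \<longrightarrow> a \<noteq> b \<longrightarrow> cinner k (mat_row_fun W' a) (mat_row_fun W' b) = 0)"
  using l
proof (induction l)
  case 0
  show ?case
    using W by auto
next
  case (Suc l)
  then obtain W1 where W1: "W1 \<in> carrier_mat k k" "det W1 = det W"
    "\<forall>a<k. sq_norm_fun k (mat_row_fun W1 a) \<le> sq_norm_fun k (mat_row_fun W a)"
    "\<forall>a b. a < l \<longrightarrow> b < l \<longrightarrow> a \<noteq> b \<longrightarrow> cinner k (mat_row_fun W1 a) (mat_row_fun W1 b) = 0"
    by auto
  obtain W2 where W2: "W2 \<in> carrier_mat k k" "det W2 = det W1"
    "\<And>a. a < k \<Longrightarrow> sq_norm_fun k (mat_row_fun W2 a) \<le> sq_norm_fun k (mat_row_fun W1 a)"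
    "\<And>a b. a < Suc l \<Longrightarrow> b < Suc l \<Longrightarrow> a \<noteq> b \<Longrightarrow> cinner k (mat_row_fun W2 a) (mat_row_fun W2 b) = 0"
    using orthogonalize_row[OF W1(1), of l] Suc.prems W1(4) by auto
  have "\<forall>a<k. sq_norm_fun k (mat_row_fun W2 a) \<le> sq_norm_fun k (mat_row_fun W a)"
    using W1(3) W2(3) order_trans by blast
  with W1(2) W2 show ?case
    by auto
qed

lemma det_orthogonal_rows:
  assumes W: "W \<in> carrier_mat k k"
    and orth: "\<And>a b. a < k \<Longrightarrow> b < k \<Longrightarrow> a \<noteq> b \<Longrightarrow> cinner k (mat_row_fun W a) (mat_row_fun W b) = 0"
  shows "(cmod (det W))\<^sup>2 = (\<Prod>a<k. sq_norm_fun k (mat_row_fun W a))"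
proof -
  interpret cnj: comm_ring_hom cnj
    by unfold_locales auto
  define W' where "W' = map_mat cnj (transpose_mat W)"
  have W': "W' \<in> carrier_mat k k"
    using W unfolding W'_def by auto
  define D where "D = mat k k (\<lambda>(a, b). cinner k (mat_row_fun W a) (mat_row_fun W b))"
  have "W * W' = D"
    using W W' unfolding D_def W'_def
    by (intro eq_matI) (auto simp: scalar_prod_def cinner_def mat_row_fun_def intro!: sum.cong)
  moreover have "det W' = cnj (det W)"
    unfolding W'_def cnj.hom_det det_transpose[OF W] ..
  ultimately have "det D = det W * cnj (det W)"
    using det_mult[OF W W'] by simp
  also have "\<dots> = of_real ((cmod (det W))\<^sup>2)"
    by (rule complex_norm_square[symmetric])
  finally have "of_real ((cmod (det W))\<^sup>2) = det D" ..
  also have "det D = prod_list (diag_mat D)"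
    by (rule det_upper_triangular) (auto simp: D_def upper_triangular_def orth)
  also have "\<dots> = of_real (\<Prod>a<k. sq_norm_fun k (mat_row_fun W a))"
    unfolding prod_list_diag_prod of_real_prod
    by (auto simp: D_def atLeast0LessThan cinner_self intro!: prod.cong)
  finally show ?thesis
    using of_real_eq_iff by blast
qed

theorem hadamard_inequality:
  assumes W: "W \<in> carrier_mat k k"
  shows "(cmod (det W))\<^sup>2 \<le> (\<Prod>a<k. sq_norm_fun k (mat_row_fun W a))"
proof -
  obtain W' where W': "W' \<in> carrier_mat k k" "det W' = det W"
    "\<forall>a<k. sq_norm_fun k (mat_row_fun W' a) \<le> sq_norm_fun k (mat_row_fun W a)"
    "\<forall>a b. a < k \<longrightarrow> b < k \<longrightarrow> a \<noteq> b \<longrightarrow> cinner k (mat_row_fun W' a) (mat_row_fun W' b) = 0"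
    using orthogonalize_rows[OF W order_refl] by auto
  have "(cmod (det W))\<^sup>2 = (\<Prod>a<k. sq_norm_fun k (mat_row_fun W' a))"
    using det_orthogonal_rows[OF W'(1)] W'(2,4) by auto
  also have "\<dots> \<le> (\<Prod>a<k. sq_norm_fun k (mat_row_fun W a))"
    using W'(3) by (intro prod_mono conjI sq_norm_fun_nonneg) auto
  finally show ?thesis .
qed

lemma norm_det_le_entry_bound:
  assumes W: "W \<in> carrier_mat k k" and "0 \<le> B"
    and entries: "\<And>i j. i < k \<Longrightarrow> j < k \<Longrightarrow> cmod (W $$ (i, j)) \<le> B"
  shows "cmod (det W) \<le> sqrt (real k ^ k) * B ^ k"
proof -
  have "sq_norm_fun k (mat_row_fun W a) \<le> (\<Sum>t<k. B\<^sup>2)" if "a < k" for a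
    unfolding sq_norm_fun_def mat_row_fun_def using that
    by (intro sum_mono power_mono entries) auto
  then have "(\<Prod>a<k. sq_norm_fun k (mat_row_fun W a)) \<le> (\<Prod>a<k. real k * B\<^sup>2)"
    by (intro prod_mono conjI sq_norm_fun_nonneg) auto
  with hadamard_inequality[OF W] have "(cmod (det W))\<^sup>2 \<le> (sqrt (real k ^ k) * B ^ k)\<^sup>2"
    by (simp add: power_mult_distrib power_mult[symmetric] mult.commute)
  then show ?thesis
    by (rule power2_le_imp_le) (use \<open>0 \<le> B\<close> in auto)
qed

section \<open>Coefficients of the characteristic polynomial\<close>

lemma norm_coeff_char_poly_le:
  assumes "M \<in> carrier_mat m m" and "0 \<le> B"
    and "\<And>i j. i < m \<Longrightarrow> j < m \<Longrightarrow> cmod (M $$ (i, j)) \<le> B"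
  shows "cmod (coeff (char_poly M) j) \<le> real (m choose j) * sqrt (real (m - j) ^ (m - j)) * B ^ (m - j)"
  using assms(1,3)
proof (induction j arbitrary: M m)
  case (0 M m)
  have X: "- char_matrix M 0 \<in> carrier_mat m m"
    using 0 by auto
  have "coeff (char_poly M) 0 = det (- char_matrix M 0)"
    by (simp add: poly_0_coeff_0[symmetric] char_poly_matrix[OF 0(1)])
  also have "cmod \<dots> \<le> sqrt (real m ^ m) * B ^ m"
    by (rule norm_det_le_entry_bound[OF X assms(2)]) (use 0 in \<open>auto simp: char_matrix_def\<close>)
  finally show ?case
    by simp
next
  case (Suc j M m)
  let ?b = "real ((m - 1) choose j) * sqrt (real (m - 1 - j) ^ (m - 1 - j)) * B ^ (m - 1 - j)"
  have "of_nat (Suc j) * coeff (char_poly M) (Suc j) = coeff (pderiv (char_poly M)) j"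
    by (simp add: coeff_pderiv)
  also have "\<dots> = (\<Sum>i<m. coeff (char_poly (mat_delete M i i)) j)"
    unfolding pderiv_char_poly[OF Suc.prems(1)] coeff_sum ..
  finally have "cmod (of_nat (Suc j) * coeff (char_poly M) (Suc j))
      = cmod (\<Sum>i<m. coeff (char_poly (mat_delete M i i)) j)"
    by (rule arg_cong)
  then have "real (Suc j) * cmod (coeff (char_poly M) (Suc j))
      = cmod (\<Sum>i<m. coeff (char_poly (mat_delete M i i)) j)"
    by (simp only: norm_mult norm_of_nat)
  also have "\<dots> \<le> (\<Sum>i<m. cmod (coeff (char_poly (mat_delete M i i)) j))"
    by (rule norm_sum)
  also have "\<dots> \<le> (\<Sum>i<m. ?b)"
  proof (rule sum_mono)
    fix i
    show "cmod (coeff (char_poly (mat_delete M i i)) j) \<le> ?b"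
      using Suc.prems by (intro Suc.IH mat_delete_carrier) (auto simp: mat_delete_def)
  qed
  also have "\<dots> = real (Suc j) * (real (m choose Suc j) * sqrt (real (m - Suc j) ^ (m - Suc j)) * B ^ (m - Suc j))"
  proof -
    have "real (Suc j) * real (m choose Suc j) = real m * real ((m - 1) choose j)"
      by (simp only: of_nat_mult[symmetric] binomial_absorption)
    then show ?thesis
      by (simp add: mult.assoc[symmetric])
  qed
  finally show ?case
    by (rule mult_left_le_imp_le) simp
qed

lemma poly_inf_norm_le:
  assumes "\<And>j. j \<le> degree p \<Longrightarrow> cmod (coeff p j) \<le> R"
  shows "poly_inf_norm p \<le> R"
  unfolding poly_inf_norm_def using assms by (subst Max_le_iff) auto

lemma norm_coeff_le_poly_inf_norm: "j \<le> degree p \<Longrightarrow> cmod (coeff p j) \<le> poly_inf_norm p"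
  unfolding poly_inf_norm_def by (rule Max_ge) auto

section \<open>A binomial inequality\<close>

lemma sum_exp_series_le_exp:
  fixes x :: real
  assumes "0 \<le> x"
  shows "(\<Sum>i<N. x ^ i / fact i) \<le> exp x"
proof -
  have sums: "(\<lambda>i. x ^ i / fact i) sums exp x"
    using exp_converges[of x] by (simp add: divide_inverse mult.commute)
  have "(\<Sum>i<N. x ^ i / fact i) \<le> (\<Sum>i. x ^ i / fact i)"
    by (rule sum_le_suminf) (use sums assms in \<open>auto simp: sums_iff\<close>)
  with sums show ?thesis
    by (simp add: sums_iff)
qed

lemma power_div_fact_le_exp:
  fixes x :: real
  assumes "0 \<le> x"
  shows "x ^ m / fact m \<le> exp x"
proof -
  have "x ^ m / fact m \<le> (\<Sum>i<Suc m. x ^ i / fact i)"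
    by (rule member_le_sum) (use assms in auto)
  also have "\<dots> \<le> exp x"
    by (rule sum_exp_series_le_exp[OF assms])
  finally show ?thesis .
qed

lemma ln_2_ge: "0.6931471 \<le> (ln 2 :: real)"
proof -
  define f :: "nat \<Rightarrow> real" where "f n = (1 / 2) ^ Suc n / real (n + 1)" for n
  have summable: "summable f"
    unfolding f_def
    by (rule summable_comparison_test[OF _ summable_geometric[of "1 / 2 :: real"]])
      (auto intro!: exI[of _ 0] simp: divide_le_eq)
  have "ln (1 / 2 :: real) = (\<Sum>n. (- 1) ^ n * (1 / real (n + 1)) * (1 / 2 - 1) ^ Suc n)"
    by (rule ln_series) auto
  also have "(\<lambda>n. (- 1) ^ n * (1 / real (n + 1)) * ((1 :: real) / 2 - 1) ^ Suc n) = (\<lambda>n. - f n)"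
    unfolding f_def by (rule ext) (simp add: power_minus' field_simps)
  also have "(\<Sum>n. - f n) = - (\<Sum>n. f n)"
    by (rule suminf_minus[OF summable])
  finally have ln_2: "ln 2 = (\<Sum>n. f n)"
    by (simp add: ln_div)
  have "0.6931471 \<le> (\<Sum>n<22. f n)"
    by (simp add: lessThan_nat_numeral f_def power_divide)
  also have "\<dots> \<le> ln 2"
    unfolding ln_2 by (rule sum_le_suminf[OF summable]) (auto simp: f_def)
  finally show ?thesis .
qed

definition lambda0 :: real where
  "lambda0 = 2 powr 0.21163175"

lemma lambda0_pos: "0 < lambda0"
  unfolding lambda0_def by simp

lemma lambda0_ge: "1.157997185 \<le> lambda0"
proof -
  define d :: real where "d = 0.21163175 - 1 / 5"
  define y :: real where "y = d * 0.6931471"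
  have lambda0: "lambda0 = 2 powr (1 / 5) * 2 powr d"
    unfolding lambda0_def d_def by (simp flip: powr_add)
  have fifth_root: "1.1486983549 \<le> (2 powr (1 / 5) :: real)"
  proof (rule ccontr)
    assume "\<not> ?thesis"
    then have "(2 powr (1 / 5 :: real)) ^ 5 < 1.1486983549 ^ 5"
      by (intro power_strict_mono) auto
    moreover have "(2 powr (1 / 5 :: real)) ^ 5 = 2"
      by (simp flip: powr_realpow add: powr_powr)
    ultimately show False
      by (simp add: power_divide)
  qed
  have y: "0 \<le> y" "y \<le> d * ln 2"
    using ln_2_ge by (auto simp: y_def d_def)
  have "1 + y + y\<^sup>2 / 2 + y ^ 3 / 6 \<le> 1 + d * ln 2 + (d * ln 2)\<^sup>2 / 2 + (d * ln 2) ^ 3 / 6"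
    using y by (intro add_mono power_mono divide_right_mono) auto
  also have "\<dots> = (\<Sum>i<4. (d * ln 2) ^ i / fact i)"
    by (simp add: lessThan_nat_numeral fact_numeral)
  also have "\<dots> \<le> 2 powr d"
    using sum_exp_series_le_exp[of "d * ln 2" 4] y by (simp add: powr_def mult.commute)
  finally have taylor: "1 + y + y\<^sup>2 / 2 + y ^ 3 / 6 \<le> 2 powr d" .
  have "1.157997185 \<le> 1.1486983549 * (1 + y + y\<^sup>2 / 2 + y ^ 3 / 6)"
    by (simp add: y_def d_def power_divide)
  also have "\<dots> \<le> 2 powr (1 / 5) * 2 powr d"
    by (intro mult_mono fifth_root taylor) (use y in auto)
  finally show ?thesis
    unfolding lambda0 .
qed

lemma lambda0_ge_22_19: "22 / 19 \<le> lambda0"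
  using lambda0_ge by simp

lemma ln_lambda0_ge: "1 / 7 \<le> ln lambda0"
proof -
  have "exp (1 / 28 :: real) \<le> 28 / 27"
    using exp_ge_add_one_self[of "- 1 / 28 :: real"] by (simp add: exp_minus field_simps)
  then have "exp (1 / 7 :: real) \<le> (28 / 27) ^ 4"
    using exp_of_nat_mult[of 4 "1 / 28 :: real"] by (simp add: power_mono)
  also have "\<dots> \<le> 22 / 19"
    by (simp add: power_divide)
  also have "\<dots> \<le> lambda0"
    by (rule lambda0_ge_22_19)
  finally show ?thesis
    using ln_ge_iff[OF lambda0_pos] by blast
qed

lemma binomial_mult_pow_le: "k \<le> n \<Longrightarrow> (n choose k) * k ^ k * (n - k) ^ (n - k) \<le> n ^ n"
proof -
  assume "k \<le> n"
  then have "n ^ n = (\<Sum>i\<le>n. (n choose i) * k ^ i * (n - k) ^ (n - i))"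
    using binomial_ring[of k "n - k" n] by simp
  moreover have "(n choose k) * k ^ k * (n - k) ^ (n - k) \<le> (\<Sum>i\<le>n. (n choose i) * k ^ i * (n - k) ^ (n - i))"
    by (rule member_le_sum) (use \<open>k \<le> n\<close> in auto)
  ultimately show ?thesis
    by simp
qed

definition binomial_bound :: "nat \<Rightarrow> nat \<Rightarrow> bool" where
  "binomial_bound n k \<longleftrightarrow> (real (n choose k))\<^sup>2 * real k ^ k \<le> real n ^ n * lambda0 ^ n"

lemma binomial_bound_far:
  assumes "k \<le> n" and far: "7 \<le> n - k"
  shows "binomial_bound n k"
proof -
  define m where "m = n - k"
  define C where "C = real (n choose k)"
  have C_m: "C = real (n choose m)"
    unfolding C_def m_def using assms(1) by (simp flip: binomial_symmetric)
  have "real ((n choose k) * k ^ k * (n - k) ^ (n - k)) \<le> real (n ^ n)"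
    using binomial_mult_pow_le[OF assms(1)] by (simp only: of_nat_le_iff)
  then have "C * real k ^ k * real m ^ m \<le> real n ^ n"
    unfolding C_def m_def by (simp only: of_nat_mult of_nat_power)
  then have C_sq: "C\<^sup>2 * real k ^ k * real m ^ m \<le> C * real n ^ n"
    using mult_left_mono[of _ _ C] by (simp add: C_def power2_eq_square mult.assoc)
  have "0 \<le> ln lambda0"
    using ln_lambda0_ge by linarith
  have n_le: "real n \<le> real m * (real n * ln lambda0)"
  proof -
    have "1 \<le> real m * ln lambda0"
      using mult_mono[of 7 "real m" "1 / 7" "ln lambda0"] far ln_lambda0_ge unfolding m_def by simp
    then show ?thesis
      using mult_left_mono[of 1 "real m * ln lambda0" "real n"] by (simp add: ac_simps)
  qed
  have "real ((n choose m) * fact m) \<le> real (n ^ m)"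
    using binomial_fact_pow[of n m] by (simp only: of_nat_le_iff)
  then have "C * fact m \<le> real n ^ m"
    unfolding C_m by (simp only: of_nat_mult of_nat_power of_nat_fact)
  also have "\<dots> \<le> (real m * (real n * ln lambda0)) ^ m"
    using n_le by (rule power_mono) simp
  also have "\<dots> = real m ^ m * (real n * ln lambda0) ^ m"
    by (rule power_mult_distrib)
  also have "\<dots> \<le> real m ^ m * (lambda0 ^ n * fact m)"
    using power_div_fact_le_exp[of "real n * ln lambda0" m] \<open>0 \<le> ln lambda0\<close> lambda0_pos
    by (intro mult_left_mono) (auto simp: exp_of_nat_mult divide_le_eq)
  finally have "C \<le> real m ^ m * lambda0 ^ n"
    by (simp add: mult.assoc)
  then have "C * real n ^ n \<le> (real m ^ m * lambda0 ^ n) * real n ^ n"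
    by (rule mult_right_mono) simp
  with C_sq have "(C\<^sup>2 * real k ^ k) * real m ^ m \<le> (real n ^ n * lambda0 ^ n) * real m ^ m"
    by (simp add: ac_simps)
  moreover have "0 < real m ^ m"
    using far unfolding m_def by simp
  ultimately show ?thesis
    unfolding binomial_bound_def C_def by (rule mult_right_le_imp_le)
qed

lemma one_plus_inverse_pow_le_Suc:
  assumes "1 \<le> j"
  shows "(real j + 1) ^ (2 * j + 1) \<le> real j ^ j * (real j + 2) ^ (j + 1)"
proof -
  define a where "a = real j + 1"
  have a: "0 < a" "real j = a - 1"
    unfolding a_def by simp_all
  have "real j / a = 1 + real (j + 1) * (- 1 / a\<^sup>2)"
    using a by (simp add: field_simps power2_eq_square)
  also have "\<dots> \<le> (1 + (- 1 / a\<^sup>2)) ^ (j + 1)"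
    by (rule Bernoulli_inequality) (use assms in \<open>auto simp: a_def field_simps\<close>)
  also have "1 + (- 1 / a\<^sup>2) = (real j * (real j + 2)) / a\<^sup>2"
    using a(1) unfolding a(2) by (simp add: field_simps power2_eq_square)
  finally have "real j / a \<le> (real j * (real j + 2)) ^ (j + 1) / a ^ (2 * (j + 1))"
    by (simp only: power_divide power_mult)
  then have "real j / a * a ^ (2 * (j + 1)) \<le> (real j * (real j + 2)) ^ (j + 1)"
    using a(1) by (simp add: field_simps)
  moreover have "real j / a * a ^ (2 * (j + 1)) = real j * a ^ (2 * j + 1)"
    using a(1) by (simp add: power_Suc)
  ultimately have "real j * a ^ (2 * j + 1) \<le> (real j * (real j + 2)) ^ (j + 1)"
    by linarith
  also have "\<dots> = real j * (real j ^ j * (real j + 2) ^ (j + 1))"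
    by (simp add: power_mult_distrib)
  finally show ?thesis
    unfolding a_def using assms by simp
qed

lemma one_plus_inverse_pow_mono:
  assumes "1 \<le> k" "k \<le> n"
  shows "(real k + 1) ^ k * real n ^ n \<le> (real n + 1) ^ n * real k ^ k"
  using assms(2)
proof (induction n rule: dec_induct)
  case base
  show ?case
    by (simp add: mult.commute)
next
  case (step n)
  have "1 \<le> n"
    using step assms(1) by simp
  have "((real k + 1) ^ k * real (Suc n) ^ Suc n) * real n ^ n
      = ((real k + 1) ^ k * real n ^ n) * (real n + 1) ^ (n + 1)"
    by (simp add: ac_simps)
  also have "\<dots> \<le> ((real n + 1) ^ n * real k ^ k) * (real n + 1) ^ (n + 1)"
    by (intro mult_right_mono step.IH) auto
  also have "\<dots> = (real n + 1) ^ (2 * n + 1) * real k ^ k"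
    by (simp add: ac_simps flip: power_add mult_2)
  also have "\<dots> \<le> (real n ^ n * (real n + 2) ^ (n + 1)) * real k ^ k"
    by (intro mult_right_mono one_plus_inverse_pow_le_Suc \<open>1 \<le> n\<close>) auto
  also have "\<dots> = ((real (Suc n) + 1) ^ Suc n * real k ^ k) * real n ^ n"
    by (simp add: ac_simps)
  finally show ?case
    using \<open>1 \<le> n\<close> by (simp add: mult_le_cancel_right)
qed

lemma binomial_bound_Suc:
  assumes "1 \<le> k" "k \<le> n" and step: "real n + 1 \<le> lambda0 * (real k + 1)"
    and "binomial_bound n k"
  shows "binomial_bound (Suc n) (Suc k)"
proof -
  define C where "C = real (n choose k)"
  define C' where "C' = real (Suc n choose Suc k)"
  have "real (Suc n choose Suc k) * real (Suc k) = real (Suc n) * real (n choose k)"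
    by (simp only: of_nat_mult[symmetric] Suc_times_binomial_eq)
  then have C': "C' * (real k + 1) = (real n + 1) * C"
    unfolding C_def C'_def by (simp add: algebra_simps)
  have IH: "C\<^sup>2 * real k ^ k \<le> real n ^ n * lambda0 ^ n"
    using \<open>binomial_bound n k\<close> unfolding binomial_bound_def C_def .
  have "(C'\<^sup>2 * (real k + 1) ^ Suc k) * ((real k + 1) * real k ^ k)
      = (C' * (real k + 1))\<^sup>2 * (real k + 1) ^ k * real k ^ k"
    by (simp add: power2_eq_square ac_simps)
  also have "\<dots> = (real n + 1)\<^sup>2 * (C\<^sup>2 * real k ^ k) * (real k + 1) ^ k"
    unfolding C' by (simp add: power_mult_distrib ac_simps)
  also have "\<dots> \<le> (real n + 1)\<^sup>2 * (real n ^ n * lambda0 ^ n) * (real k + 1) ^ k"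
    by (intro mult_right_mono mult_left_mono IH) auto
  also have "\<dots> = (real n + 1)\<^sup>2 * lambda0 ^ n * ((real k + 1) ^ k * real n ^ n)"
    by (simp add: ac_simps)
  also have "\<dots> \<le> (real n + 1)\<^sup>2 * lambda0 ^ n * ((real n + 1) ^ n * real k ^ k)"
    by (intro mult_left_mono one_plus_inverse_pow_mono assms) (use lambda0_pos in auto)
  also have "\<dots> = ((real n + 1) ^ Suc n * lambda0 ^ n * real k ^ k) * (real n + 1)"
    by (simp add: power2_eq_square ac_simps)
  also have "\<dots> \<le> ((real n + 1) ^ Suc n * lambda0 ^ n * real k ^ k) * (lambda0 * (real k + 1))"
    by (intro mult_left_mono step) (use lambda0_pos in auto)
  also have "\<dots> = ((real n + 1) ^ Suc n * lambda0 ^ Suc n) * ((real k + 1) * real k ^ k)"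
    by (simp add: ac_simps)
  finally have "(C'\<^sup>2 * (real k + 1) ^ Suc k) * ((real k + 1) * real k ^ k)
      \<le> ((real n + 1) ^ Suc n * lambda0 ^ Suc n) * ((real k + 1) * real k ^ k)" .
  moreover have "0 < (real k + 1) * real k ^ k"
    using assms(1) by simp
  ultimately have "C'\<^sup>2 * (real k + 1) ^ Suc k \<le> (real n + 1) ^ Suc n * lambda0 ^ Suc n"
    by (rule mult_right_le_imp_le)
  then show ?thesis
    unfolding binomial_bound_def C'_def by (simp add: add.commute)
qed

lemma binomial_bound_shift:
  assumes "1 \<le> m" "22 * m \<le> 3 * b + 3" "binomial_bound b (b - m)" "b \<le> n"
  shows "binomial_bound n (n - m)"
  using assms(4)
proof (induction n rule: dec_induct)
  case base
  show ?case
    by (fact assms(3))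
next
  case (step n)
  have n: "22 * m \<le> 3 * n + 3"
    using assms(2) step(1) by linarith
  then have "1 \<le> n - m"
    using assms(1) by linarith
  have "real n + 1 \<le> 22 / 19 * (real (n - m) + 1)"
    using n \<open>1 \<le> n - m\<close> by (simp add: of_nat_diff field_simps)
  also have "\<dots> \<le> lambda0 * (real (n - m) + 1)"
    by (intro mult_right_mono lambda0_ge_22_19) auto
  finally have "binomial_bound (Suc n) (Suc (n - m))"
    by (intro binomial_bound_Suc \<open>1 \<le> n - m\<close> step.IH) auto
  moreover have "Suc (n - m) = Suc n - m"
    using \<open>1 \<le> n - m\<close> by simp
  ultimately show ?case
    by simp
qed

(* With the rational lower bound 22/19 of lambda0 in place of lambda0, binomial_bound becomes an
  inequality between natural numbers; P is any upper bound of (n choose m) * fact m. *)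
lemma binomial_bound_of_check:
  assumes "m \<le> n" and P: "(n choose m) * fact m \<le> P"
    and check: "P\<^sup>2 * (n - m) ^ (n - m) * 19 ^ n \<le> (fact m)\<^sup>2 * n ^ n * (22 :: nat) ^ n"
  shows "binomial_bound n (n - m)"
proof -
  define C where "C = real (n choose m)"
  have "real ((n choose m) * fact m) \<le> real P"
    using P by (simp only: of_nat_le_iff)
  then have "C * fact m \<le> real P"
    unfolding C_def by (simp only: of_nat_mult of_nat_fact)
  then have "(C * fact m)\<^sup>2 * real (n - m) ^ (n - m) * 19 ^ n \<le> real P ^ 2 * real (n - m) ^ (n - m) * 19 ^ n"
    by (intro mult_right_mono power_mono) (auto simp: C_def)
  also have "\<dots> \<le> (fact m)\<^sup>2 * real n ^ n * 22 ^ n"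
  proof -
    have "real (P\<^sup>2 * (n - m) ^ (n - m) * 19 ^ n) \<le> real ((fact m)\<^sup>2 * n ^ n * 22 ^ n)"
      using check by (simp only: of_nat_le_iff)
    then show ?thesis
      by (simp only: of_nat_mult of_nat_power of_nat_fact of_nat_numeral)
  qed
  finally have "(C\<^sup>2 * real (n - m) ^ (n - m)) * ((fact m)\<^sup>2 * 19 ^ n)
      \<le> (real n ^ n * (22 / 19) ^ n) * ((fact m)\<^sup>2 * 19 ^ n)"
    by (simp add: power_mult_distrib power_divide ac_simps)
  then have "C\<^sup>2 * real (n - m) ^ (n - m) \<le> real n ^ n * (22 / 19) ^ n"
    by (rule mult_right_le_imp_le) simp
  also have "\<dots> \<le> real n ^ n * lambda0 ^ n"
    by (intro mult_left_mono power_mono lambda0_ge_22_19) auto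
  finally show ?thesis
    unfolding binomial_bound_def C_def using binomial_symmetric[OF assms(1)] by simp
qed

lemma binomial_checks:
  shows check_1: "\<forall>n \<in> set [4..<8]. n \<noteq> 6 \<longrightarrow> n\<^sup>2 * (n - 1) ^ (n - 1) * 19 ^ n \<le> n ^ n * (22 :: nat) ^ n"
    and check_2: "\<forall>n \<in> set [4..<15]. (n * (n - 1))\<^sup>2 * (n - 2) ^ (n - 2) * 19 ^ n \<le> 2\<^sup>2 * n ^ n * (22 :: nat) ^ n"
    and check_3: "\<forall>n \<in> set [4..<23]. (n ^ 3)\<^sup>2 * (n - 3) ^ (n - 3) * 19 ^ n \<le> 6\<^sup>2 * n ^ n * (22 :: nat) ^ n"
    and check_4: "\<forall>n \<in> set [4..<30]. (n ^ 4)\<^sup>2 * (n - 4) ^ (n - 4) * 19 ^ n \<le> 24\<^sup>2 * n ^ n * (22 :: nat) ^ n"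
    and check_5: "\<forall>n \<in> set [5..<37]. (n ^ 5)\<^sup>2 * (n - 5) ^ (n - 5) * 19 ^ n \<le> 120\<^sup>2 * n ^ n * (22 :: nat) ^ n"
    and check_6: "\<forall>n \<in> set [6..<45]. (n ^ 6)\<^sup>2 * (n - 6) ^ (n - 6) * 19 ^ n \<le> 720\<^sup>2 * n ^ n * (22 :: nat) ^ n"
  by (simp_all add: upt_rec)

(* The only case not covered by 22/19: here lambda0 ^ 6 >= 112500 / 46656 is needed, and this
  is what fixes the constant 0.21163175. *)
lemma binomial_bound_6_5: "binomial_bound 6 5"
proof -
  have "(112500 :: real) \<le> 46656 * 1.157997185 ^ 6"
    by (simp add: power_divide)
  also have "\<dots> \<le> 46656 * lambda0 ^ 6"
    by (intro mult_left_mono power_mono lambda0_ge) auto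
  finally show ?thesis
    unfolding binomial_bound_def by (simp add: binomial_symmetric[of 5 6, simplified])
qed

lemma binomial_bound_near_diag:
  assumes "1 \<le> m" "m \<le> 6" "4 \<le> n" "m \<le> n" "3 * n \<le> 22 * m"
  shows "binomial_bound n (n - m)"
proof -
  have pow: "(n choose m) * fact m \<le> n ^ m"
    by (rule binomial_fact_pow)
  consider "m = 1" | "m = 2" | "m = 3" | "m = 4" | "m = 5" | "m = 6"
    using assms(1,2) by linarith
  then show ?thesis
  proof cases
    case 1
    show ?thesis
    proof (cases "n = 6")
      case True
      then show ?thesis
        using 1 binomial_bound_6_5 by simp
    next
      case False
      have "n \<in> set [4..<8]"
        unfolding set_upt using assms 1 by auto
      from check_1[rule_format, OF this False] show ?thesis
        using 1 assms(4) by (intro binomial_bound_of_check[where P = n]) auto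
    qed
  next
    case 2
    have "n \<in> set [4..<15]"
      unfolding set_upt using assms 2 by auto
    note check = check_2[rule_format, OF this]
    have "(n choose 2) * 2 = n * (n - 1)"
      using binomial_absorption[of 1 n] by (simp add: numeral_2_eq_2 mult.commute)
    with check show ?thesis
      using 2 assms(4) by (intro binomial_bound_of_check[where P = "n * (n - 1)"]) auto
  next
    case 3
    have "n \<in> set [4..<23]"
      unfolding set_upt using assms 3 by auto
    from check_3[rule_format, OF this] show ?thesis
      using 3 assms(4) pow by (intro binomial_bound_of_check[where P = "n ^ 3"]) (auto simp: fact_numeral)
  next
    case 4
    have "n \<in> set [4..<30]"
      unfolding set_upt using assms 4 by auto
    from check_4[rule_format, OF this] show ?thesis
      using 4 assms(4) pow by (intro binomial_bound_of_check[where P = "n ^ 4"]) (auto simp: fact_numeral)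
  next
    case 5
    have "n \<in> set [5..<37]"
      unfolding set_upt using assms 5 by auto
    from check_5[rule_format, OF this] show ?thesis
      using 5 assms(4) pow by (intro binomial_bound_of_check[where P = "n ^ 5"]) (auto simp: fact_numeral)
  next
    case 6
    have "n \<in> set [6..<45]"
      unfolding set_upt using assms 6 by auto
    from check_6[rule_format, OF this] show ?thesis
      using 6 assms(4) pow by (intro binomial_bound_of_check[where P = "n ^ 6"]) (auto simp: fact_numeral)
  qed
qed

theorem binomial_bound_holds:
  assumes "4 \<le> n" "k \<le> n"
  shows "binomial_bound n k"
proof -
  define m where "m = n - k"
  have k: "k = n - m"
    unfolding m_def using assms(2) by simp
  consider "m = 0" | "1 \<le> m" "m \<le> 6" | "7 \<le> m"
    by linarith
  then show ?thesis
  proof cases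
    case 1
    have "real n ^ n * 1 \<le> real n ^ n * lambda0 ^ n"
      using lambda0_ge_22_19 by (intro mult_left_mono one_le_power) auto
    then show ?thesis
      using 1 unfolding k binomial_bound_def by simp
  next
    case 2
    show ?thesis
    proof (cases "3 * n \<le> 22 * m")
      case True
      then show ?thesis
        unfolding k using 2 assms by (intro binomial_bound_near_diag) (simp_all add: m_def)
    next
      case False
      define b where "b = 22 * m div 3"
      have b: "3 * b \<le> 22 * m" "22 * m \<le> 3 * b + 3" "b \<le> n"
        using False unfolding b_def by auto
      have "binomial_bound b (b - m)"
        using 2 b by (intro binomial_bound_near_diag) linarith+
      from binomial_bound_shift[OF 2(1) b(2) this b(3)] show ?thesis
        unfolding k .
    qed
  next
    case 3
    then show ?thesis
      using assms(2) unfolding m_def by (intro binomial_bound_far) auto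
  qed
qed

lemma poly_inf_norm_char_poly_le:
  assumes "4 \<le> n" and A: "A \<in> carrier_mat n n" and "1 \<le> B"
    and entries: "\<And>i j. i < n \<Longrightarrow> j < n \<Longrightarrow> cmod (A $$ (i, j)) \<le> B"
  shows "poly_inf_norm (char_poly A) \<le> sqrt (real n ^ n * lambda0 ^ n) * B ^ n"
proof (rule poly_inf_norm_le)
  fix j assume "j \<le> degree (char_poly A)"
  then have "j \<le> n"
    using degree_monic_char_poly[OF A] by simp
  define k where "k = n - j"
  have "n choose j = n choose k"
    unfolding k_def using \<open>j \<le> n\<close> by (rule binomial_symmetric)
  have "cmod (coeff (char_poly A) j) \<le> real (n choose j) * sqrt (real k ^ k) * B ^ k"
    unfolding k_def using \<open>1 \<le> B\<close> by (intro norm_coeff_char_poly_le[OF A _ entries]) auto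
  also have "\<dots> = sqrt ((real (n choose k))\<^sup>2 * real k ^ k) * B ^ k"
    unfolding \<open>n choose j = n choose k\<close> by (simp add: real_sqrt_mult)
  also have "\<dots> \<le> sqrt (real n ^ n * lambda0 ^ n) * B ^ n"
    using binomial_bound_holds[OF assms(1), of k] \<open>1 \<le> B\<close> lambda0_pos
    by (intro mult_mono power_increasing) (auto simp: binomial_bound_def k_def)
  finally show "cmod (coeff (char_poly A) j) \<le> sqrt (real n ^ n * lambda0 ^ n) * B ^ n" .
qed

theorem lemma1:
  fixes n :: nat and A :: "complex mat" and B :: real
  assumes "n \<ge> 4"
    and "A \<in> carrier_mat n n"
    and "B > 1"
    and "\<And>i j. i < n \<Longrightarrow> j < n \<Longrightarrow> cmod (A $$ (i, j)) \<le> B"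
  shows "log 2 (poly_inf_norm (char_poly A))
           \<le> real n / 2 * (log 2 (real n) + log 2 (B\<^sup>2) + 0.21163175)"
proof -
  have "1 \<le> poly_inf_norm (char_poly A)"
    using norm_coeff_le_poly_inf_norm[of n "char_poly A"] degree_monic_char_poly[OF assms(2)] by simp
  then have "log 2 (poly_inf_norm (char_poly A)) \<le> log 2 (sqrt (real n ^ n * lambda0 ^ n) * B ^ n)"
    using poly_inf_norm_char_poly_le[OF assms(1,2) _ assms(4)] assms(3) by simp
  also have "\<dots> = (real n * log 2 (real n) + real n * log 2 lambda0) / 2 + real n * log 2 B"
    using assms(1,3) lambda0_pos
    by (simp add: log_mult log_nat_power sqrt_def log_root)
  also have "\<dots> = real n / 2 * (log 2 (real n) + log 2 (B\<^sup>2) + 0.21163175)"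
    using assms(3) by (simp add: lambda0_def log_nat_power field_simps)
  finally show ?thesis .
qed

end
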